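(* Let $M,N$ be positive integers, let $\Delta>0$ and $T=1/\Delta$, and let $c>0$, $\lambda>0$, $\alpha\in\mathbb{C}$, $v\in\mathbb{R}$. Let $g_{\rm tx},g_{\rm rx}\in L^2(\mathbb{R})$ be (complex-valued) transmit and receive shaping filters, and let $\{X_{\rm TF}[n,m]\}$, $n=0,\dots,N-1$, $m=0,\dots,M-1$, be arbitrary complex numbers. Define, for $n=0,\dots,N-1$, $$x_n(t)=\sum_{m=0}^{M-1}X_{\rm TF}[n,m]\,g_{\rm tx}(t-nT)\,e^{\mathrm{i}2\pi m\Delta(t-nT)}.$$ Let $r:[0,\infty)\to\mathbb{R}$ be any function (the excess target range) and suppose the received signal is (the variation of the target range within each symbol interval being ignored) $$y(t)=\sum_{n=0}^{N-1}\alpha\, x_n\!\left(t-\frac{r(nT)}{c}\right)e^{\mathrm{i}2\pi\frac{v}{\lambda}t}.$$ Define, for $n=0,\dots,N-1$ and $m=0,\dots,M-1$, $$Y_{\rm TF}[n,m]=\int_{-\infty}^{\infty}y(t)\,g_{\rm rx}^{*}(t-nT)\,e^{-\mathrm{i}2\pi m\Delta(t-nT)}\,dt,$$ and the cross-ambiguity function $\gamma(\tau,\nu)=\int_{-\infty}^{\infty}g_{\rm tx}(\beta)\,g_{\rm rx}^{*}(\beta-\tau)\,e^{-\mathrm{i}2\pi\nu(\beta-\tau)}\,d\beta$. Then for all $n=0,\dots,N-1$ and $m=0,\dots,M-1$, $$Y_{\rm TF}[n,m]=\sum_{n'=0}^{N-1}\sum_{m'=0}^{M-1}H_{n,m}[n',m']\,X_{\rm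 TF}[n',m'],$$ where $$H_{n,m}[n',m']=\alpha\, e^{\mathrm{i}2\pi\frac{v}{\lambda}nT}\,e^{-\mathrm{i}2\pi m'\Delta\frac{r(n'T)}{c}}\,\gamma\!\left((n-n')T-\frac{r(n'T)}{c},\,(m-m')\Delta-\frac{v}{\lambda}\right).$$
   Context: $\mathrm{i}$ is the imaginary unit and $(\cdot)^*$ denotes complex conjugation. Physically, $c$ is the speed of light, $\lambda$ the carrier wavelength, $v$ the excess target range-rate, $\alpha$ the target amplitude; $M$ is the number of subcarriers, $N$ the number of symbol intervals, $\Delta$ the subcarrier spacing. *)

theory Defs
  imports "HOL-Analysis.Analysis"
begin

definition L2 :: "(real \<Rightarrow> complex) set" where
  "L2 = {g. g \<in> borel_measurable lborel \<and> integrable lborel (\<lambda>t. (norm (g t))^2)}"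

definition tx_sym :: "nat \<Rightarrow> real \<Rightarrow> real \<Rightarrow> (real \<Rightarrow> complex) \<Rightarrow> (nat \<Rightarrow> nat \<Rightarrow> complex)
    \<Rightarrow> nat \<Rightarrow> real \<Rightarrow> complex" where
  "tx_sym M \<Delta> T gtx X n t =
     (\<Sum>m<M. X n m * gtx (t - real n * T) *
        exp (\<i> * complex_of_real (2 * pi * real m * \<Delta> * (t - real n * T))))"

definition rx_sig :: "nat \<Rightarrow> nat \<Rightarrow> real \<Rightarrow> real \<Rightarrow> real \<Rightarrow> real \<Rightarrow> complex \<Rightarrow> real
    \<Rightarrow> (real \<Rightarrow> real) \<Rightarrow> (real \<Rightarrow> complex) \<Rightarrow> (nat \<Rightarrow> nat \<Rightarrow> complex) \<Rightarrow> real \<Rightarrow> complex" where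
  "rx_sig M N \<Delta> T c lam \<alpha> v r gtx X t =
     (\<Sum>n<N. \<alpha> * tx_sym M \<Delta> T gtx X n (t - r (real n * T) / c) *
        exp (\<i> * complex_of_real (2 * pi * (v / lam) * t)))"

definition cross_amb :: "(real \<Rightarrow> complex) \<Rightarrow> (real \<Rightarrow> complex) \<Rightarrow> real \<Rightarrow> real \<Rightarrow> complex" where
  "cross_amb gtx grx \<tau> \<nu> =
     (LINT \<beta>|lborel. gtx \<beta> * cnj (grx (\<beta> - \<tau>)) *
        exp (- \<i> * complex_of_real (2 * pi * \<nu> * (\<beta> - \<tau>))))"

end

theory Submission
  imports Defs
begin

(* Expanding y, the matched-filter output Y_TF[n,m] is a finite sum over (n',m') of correlations
   of a translated g_tx against a translated, modulated g_rx; each is Lebesgue integrable because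
   |f g| <= |f|^2 + |g|^2 for f, g in L^2. The substitution beta = t - n'T - r(n'T)/c turns each
   correlation into the cross-ambiguity function, up to the constant phase of H_{n,m}[n',m'] and a
   residual phase exp(i 2 pi m'(n - n') Delta T), which is 1 because Delta T = 1. *)

lemma borel_measurable_cnj [measurable]: "(cnj :: complex \<Rightarrow> complex) \<in> borel_measurable borel"
  by (intro borel_measurable_continuous_onI continuous_intros)

lemma L2_translate:
  assumes "g \<in> L2"
  shows "(\<lambda>t. g (t + b)) \<in> L2"
proof -
  have "integrable lborel (\<lambda>t. (norm (g (b + 1 * t)))^2)"
    using assms by (intro lborel_integrable_real_affine) (auto simp: L2_def)
  then show ?thesis
    using assms by (auto simp: L2_def add.commute)
qed

lemma integrable_L2_mult_cnj:
  assumes f: "f \<in> L2" and g: "g \<in> L2"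
  shows "integrable lborel (\<lambda>t. f t * cnj (g t))"
proof (rule Bochner_Integration.integrable_bound)
  show "integrable lborel (\<lambda>t. (norm (f t))^2 + (norm (g t))^2)"
    using f g by (auto simp: L2_def)
  have [measurable]: "f \<in> borel_measurable borel" "g \<in> borel_measurable borel"
    using f g by (simp_all add: L2_def)
  show "(\<lambda>t. f t * cnj (g t)) \<in> borel_measurable lborel"
    by measurable
  show "AE t in lborel. norm (f t * cnj (g t)) \<le> norm ((norm (f t))^2 + (norm (g t))^2)"
  proof (rule AE_I2)
    fix t
    have "norm (f t) * norm (g t) \<le> 2 * norm (f t) * norm (g t)"
      by simp
    also have "\<dots> \<le> (norm (f t))^2 + (norm (g t))^2"
      by (rule sum_squares_bound)
    finally show "norm (f t * cnj (g t)) \<le> norm ((norm (f t))^2 + (norm (g t))^2)"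
      by (simp add: norm_mult)
  qed
qed

lemma integrable_translated_ambiguity_integrand:
  assumes "gtx \<in> L2" "grx \<in> L2"
  shows "integrable lborel (\<lambda>t. gtx (t - s) * cnj (grx (t - u)) *
           exp (- \<i> * complex_of_real (2 * pi * \<nu> * (t - u))))"
proof (rule Bochner_Integration.integrable_bound)
  show "integrable lborel (\<lambda>t. gtx (t + - s) * cnj (grx (t + - u)))"
    using assms by (intro integrable_L2_mult_cnj L2_translate)
  have [measurable]: "gtx \<in> borel_measurable borel" "grx \<in> borel_measurable borel"
    using assms by (simp_all add: L2_def)
  show "(\<lambda>t. gtx (t - s) * cnj (grx (t - u)) * exp (- \<i> * complex_of_real (2 * pi * \<nu> * (t - u))))
          \<in> borel_measurable lborel"
    by measurable
  show "AE t in lborel. norm (gtx (t - s) * cnj (grx (t - u)) * exp (- \<i> * complex_of_real (2 * pi * \<nu> * (t - u))))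
          \<le> norm (gtx (t + - s) * cnj (grx (t + - u)))"
    by (simp add: norm_mult)
qed

lemma cross_amb_translate:
  "(LINT t|lborel. gtx (t - s) * cnj (grx (t - u)) *
      exp (- \<i> * complex_of_real (2 * pi * \<nu> * (t - u))))
   = cross_amb gtx grx (u - s) \<nu>" (is "integral\<^sup>L lborel ?f = _")
proof -
  have "integral\<^sup>L lborel ?f = (LINT \<beta>|lborel. ?f (\<beta> + s))"
    using lborel_integral_real_affine[of 1 ?f s] by (simp add: add.commute)
  also have "\<dots> = cross_amb gtx grx (u - s) \<nu>"
    unfolding cross_amb_def by (simp add: diff_diff_eq2)
  finally show ?thesis .
qed

lemma exp_echo_phase:
  fixes \<Delta> T w d t m m' n n' :: real
  assumes "\<Delta> * T = 1" and "m' \<in> \<int>" "n \<in> \<int>" "n' \<in> \<int>"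
  shows "exp (\<i> * complex_of_real (2 * pi * m' * \<Delta> * (t - d - n' * T))) *
         exp (\<i> * complex_of_real (2 * pi * w * t)) *
         exp (- \<i> * complex_of_real (2 * pi * m * \<Delta> * (t - n * T)))
       = exp (\<i> * complex_of_real (2 * pi * w * n * T)) *
         exp (- \<i> * complex_of_real (2 * pi * m' * \<Delta> * d)) *
         exp (- \<i> * complex_of_real (2 * pi * ((m - m') * \<Delta> - w) * (t - n * T)))"
  (is "?lhs = ?rhs")
proof -
  define e where "e x = exp (\<i> * complex_of_real (2 * pi * x))" for x
  have e_add: "e x * e y = e (x + y)" for x y
    by (simp add: e_def exp_add[symmetric] algebra_simps)
  have e_periodic: "e (x + of_int k) = e x" for x k
    unfolding e_def exp_eq by (intro exI[of _ k]) (simp add: algebra_simps)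
  obtain k where k: "m' * (n - n') = of_int k"
    using assms(2-4) by (metis Ints_cases Ints_diff Ints_mult)
  have "?lhs = e (m' * \<Delta> * (t - d - n' * T)) * e (w * t) * e (- (m * \<Delta> * (t - n * T)))"
    by (simp add: e_def mult.assoc)
  also have "\<dots> = e (w * n * T + - (m' * \<Delta> * d) + - (((m - m') * \<Delta> - w) * (t - n * T))
                     + m' * (n - n') * (\<Delta> * T))"
    unfolding e_add by (rule arg_cong[where f = e]) (simp add: algebra_simps)
  also have "\<dots> = e (w * n * T) * e (- (m' * \<Delta> * d)) * e (- (((m - m') * \<Delta> - w) * (t - n * T)))"
    using assms(1) by (simp add: k e_periodic e_add)
  also have "\<dots> = ?rhs"
    by (simp add: e_def mult.assoc)
  finally show ?thesis .
qed

lemma rx_sig_matched_filter_expansion: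
  fixes n m :: nat
  assumes "\<Delta> * T = 1"
  shows "rx_sig M N \<Delta> T c lam \<alpha> v r gtx X t * cnj (grx (t - real n * T)) *
           exp (- \<i> * complex_of_real (2 * pi * real m * \<Delta> * (t - real n * T)))
       = (\<Sum>n'<N. \<Sum>m'<M.
            (\<alpha> * exp (\<i> * complex_of_real (2 * pi * (v / lam) * real n * T)) *
             exp (- \<i> * complex_of_real (2 * pi * real m' * \<Delta> * (r (real n' * T) / c)))) * X n' m' *
            (gtx (t - (r (real n' * T) / c + real n' * T)) * cnj (grx (t - real n * T)) *
             exp (- \<i> * complex_of_real (2 * pi * ((real m - real m') * \<Delta> - v / lam) * (t - real n * T)))))"
proof -
  have summand: "\<alpha> * (X n' m' * gtx (t - d - real n' * T) *
                exp (\<i> * complex_of_real (2 * pi * real m' * \<Delta> * (t - d - real n' * T)))) *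
              exp (\<i> * complex_of_real (2 * pi * (v / lam) * t)) * cnj (grx (t - real n * T)) *
              exp (- \<i> * complex_of_real (2 * pi * real m * \<Delta> * (t - real n * T)))
     = (\<alpha> * exp (\<i> * complex_of_real (2 * pi * (v / lam) * real n * T)) *
        exp (- \<i> * complex_of_real (2 * pi * real m' * \<Delta> * d))) * X n' m' *
       (gtx (t - (d + real n' * T)) * cnj (grx (t - real n * T)) *
        exp (- \<i> * complex_of_real (2 * pi * ((real m - real m') * \<Delta> - v / lam) * (t - real n * T))))"
    for n' m' :: nat and d
    using exp_echo_phase[OF assms, of "real m'" "real n" "real n'" t d "v / lam" "real m"]
    by (simp add: ac_simps diff_diff_eq)
  show ?thesis
    unfolding rx_sig_def tx_sym_def sum_distrib_left sum_distrib_right summand ..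
qed

theorem proposition1:
  fixes M N :: nat and \<Delta> T c lam v :: real and \<alpha> :: complex
    and gtx grx :: "real \<Rightarrow> complex" and X :: "nat \<Rightarrow> nat \<Rightarrow> complex"
    and r :: "real \<Rightarrow> real" and n m :: nat
  assumes "M > 0" "N > 0" "\<Delta> > 0" "T = 1 / \<Delta>" "c > 0" "lam > 0"
    and "gtx \<in> L2" "grx \<in> L2"
    and "n < N" "m < M"
  shows "(LINT t|lborel. rx_sig M N \<Delta> T c lam \<alpha> v r gtx X t * cnj (grx (t - real n * T)) *
            exp (- \<i> * complex_of_real (2 * pi * real m * \<Delta> * (t - real n * T))))
       = (\<Sum>n'<N. \<Sum>m'<M.
            (\<alpha> * exp (\<i> * complex_of_real (2 * pi * (v / lam) * real n * T)) *
             exp (- \<i> * complex_of_real (2 * pi * real m' * \<Delta> * (r (real n' * T) / c))) *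
             cross_amb gtx grx ((real n - real n') * T - r (real n' * T) / c)
                               ((real m - real m') * \<Delta> - v / lam)) * X n' m')"
proof -
  have DT: "\<Delta> * T = 1"
    using assms(3,4) by simp
  have ambiguity: "(LINT t|lborel. gtx (t - (r (real n' * T) / c + real n' * T)) * cnj (grx (t - real n * T)) *
       exp (- \<i> * complex_of_real (2 * pi * \<nu> * (t - real n * T))))
     = cross_amb gtx grx ((real n - real n') * T - r (real n' * T) / c) \<nu>" for n' :: nat and \<nu>
    using cross_amb_translate[of gtx "r (real n' * T) / c + real n' * T" grx "real n * T" \<nu>]
    by (simp add: algebra_simps)
  show ?thesis
    unfolding rx_sig_matched_filter_expansion[OF DT]
    by (simp only: Bochner_Integration.integral_sum Bochner_Integration.integrable_sum
        Bochner_Integration.integrable_mult_right integral_mult_right_zero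
        integrable_translated_ambiguity_integrand[OF assms(7,8)]
        ambiguity) (simp only: ac_simps)
qed

end
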